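(* Let $N=\{1,\dots,n\}$, $\eta>0$, $B\ge1$ an integer. Let $(A(k))_{k\ge0}$ be $n\times n$ matrices, $x(0)\in\mathbb{R}^n$, and $x(k+1)=A(k)x(k)$. Assume: (i) each $A(k)$ is doubly stochastic with positive diagonal entries and all positive entries at least $\eta$; (ii) for every integer $k\ge0$, every permutation $\sigma$ of $N$ with $x_{\sigma(1)}(kB)\ge\cdots\ge x_{\sigma(n)}(kB)$, and every $d\in\{1,\dots,n-1\}$, either $x_{\sigma(d)}(kB)=x_{\sigma(d+1)}(kB)$, or there exist $t\in\{kB,\dots,(k+1)B-1\}$, $i\in\{\sigma(1),\dots,\sigma(d)\}$, $j\in\{\sigma(d+1),\dots,\sigma(n)\}$ with $(i,j)$ or $(j,i)$ in $\mathcal{E}(A(t))$. Then for every integer $k\ge0$ with $V(x(kB))>0$, \[\frac{V(x(kB))-V(x((k+1)B))}{V(x(kB))}\ge\frac{\eta}{2n^2}.\]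
   Context: A matrix is doubly stochastic if it is nonnegative with all row and column sums equal to $1$. For a matrix $A=[a_{ij}]$, $\mathcal{E}(A)$ is the set of directed edges $(j,i)$ (including self-edges) with $a_{ij}>0$. For $x\in\mathbb{R}^n$, $\bar x=\frac1n\sum_ix_i$ and $V(x)=\sum_i(x_i-\bar x)^2$. *)

theory Defs
  imports "HOL-Combinatorics.Permutations" Complex_Main
begin

text \<open>n x n matrices are functions nat => nat => real, indices 0..n-1 (index i stands for i+1).\<close>

definition doubly_stochastic :: "nat \<Rightarrow> (nat \<Rightarrow> nat \<Rightarrow> real) \<Rightarrow> bool" where
  "doubly_stochastic n A \<longleftrightarrow>
     (\<forall>i<n. \<forall>j<n. A i j \<ge> 0) \<and>
     (\<forall>i<n. (\<Sum>j<n. A i j) = 1) \<and>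
     (\<forall>j<n. (\<Sum>i<n. A i j) = 1)"

definition edges :: "nat \<Rightarrow> (nat \<Rightarrow> nat \<Rightarrow> real) \<Rightarrow> (nat \<times> nat) set" where
  "edges n A = {(j, i). i < n \<and> j < n \<and> A i j > 0}"

definition avg :: "nat \<Rightarrow> (nat \<Rightarrow> real) \<Rightarrow> real" where
  "avg n x = (\<Sum>i<n. x i) / real n"

definition V :: "nat \<Rightarrow> (nat \<Rightarrow> real) \<Rightarrow> real" where
  "V n x = (\<Sum>i<n. (x i - avg n x)^2)"

end

(*
  Sort x(kB) decreasingly as v_0 >= ... >= v_{n-1}. For a strict gap v_{d-1} > v_d the cut between
  the top d agents and the rest is crossed by an edge within the window. Before the first crossing
  each agent averages only over its own side, so the top side stays >= v_{d-1} and the bottom side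
  <= v_d; at the first crossing some row l of A(t) therefore puts weight >= eta on a value >= v_{d-1}
  and on a value <= v_d. Each step decreases V by sum_l sum_j a_lj (x_j - x'_l)^2, and such a row
  contributes at least eta/2 (v_{d-1} - v_d)^2; several gaps charged to the same row and time
  telescope inside one squared difference, which dominates the sum of their squares. So the window
  decreases V by at least eta/2 sum_d gap_d^2, whereas V(x(kB)) <= n (v_0 - v_{n-1})^2 <= n^2 sum_d gap_d^2.
*)

theory Submission
  imports Defs "HOL-Analysis.Convex"
begin

lemma weighted_average_ge:
  fixes w y :: "'a \<Rightarrow> real"
  assumes "\<And>j. j \<in> I \<Longrightarrow> 0 \<le> w j" and "sum w I = 1"
    and "\<And>j. j \<in> I \<Longrightarrow> w j \<noteq> 0 \<Longrightarrow> c \<le> y j"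
  shows "c \<le> (\<Sum>j\<in>I. w j * y j)"
proof -
  have "(\<Sum>j\<in>I. w j * c) \<le> (\<Sum>j\<in>I. w j * y j)"
    by (rule sum_mono) (metis assms(1,3) mult_left_mono mult_zero_left order_refl)
  then show ?thesis
    using assms(2) by (simp add: sum_distrib_right[symmetric])
qed

lemma weighted_average_le:
  fixes w y :: "'a \<Rightarrow> real"
  assumes "\<And>j. j \<in> I \<Longrightarrow> 0 \<le> w j" and "sum w I = 1"
    and "\<And>j. j \<in> I \<Longrightarrow> w j \<noteq> 0 \<Longrightarrow> y j \<le> c"
  shows "(\<Sum>j\<in>I. w j * y j) \<le> c"
  using weighted_average_ge[of I w "- c" "\<lambda>j. - y j"] assms by (simp add: sum_negf)

lemma V_eq_sum_squares: "V n z = (\<Sum>i<n. (z i)^2) - (\<Sum>i<n. z i)^2 / real n"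
proof (cases "n = 0")
  case False
  define S where "S = (\<Sum>i<n. z i)"
  have "V n z = (\<Sum>i<n. (z i)^2 - 2 * (S / n) * z i + (S / n)^2)"
    unfolding V_def avg_def S_def by (intro sum.cong refl) (simp add: power2_diff algebra_simps)
  also have "\<dots> = (\<Sum>i<n. (z i)^2) - 2 * (S / n) * S + n * (S / n)^2"
    by (simp add: sum.distrib sum_subtractf sum_distrib_left S_def)
  also have "\<dots> = (\<Sum>i<n. (z i)^2) - S^2 / n"
    using False by (simp add: power2_eq_square field_simps)
  finally show ?thesis unfolding S_def .
qed (simp add: V_def)

lemma doubly_stochastic_preserves_sum:
  assumes "doubly_stochastic n M" and "\<And>i. i < n \<Longrightarrow> y' i = (\<Sum>j<n. M i j * y j)"
  shows "(\<Sum>i<n. y' i) = (\<Sum>i<n. y i)"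
proof -
  have col: "\<And>j. j < n \<Longrightarrow> (\<Sum>i<n. M i j) = 1"
    using assms(1) unfolding doubly_stochastic_def by auto
  have "(\<Sum>i<n. y' i) = (\<Sum>i<n. \<Sum>j<n. M i j * y j)" using assms(2) by simp
  also have "\<dots> = (\<Sum>j<n. (\<Sum>i<n. M i j) * y j)"
    by (subst sum.swap) (simp add: sum_distrib_right)
  also have "\<dots> = (\<Sum>j<n. y j)" using col by simp
  finally show ?thesis .
qed

lemma doubly_stochastic_V_drop:
  assumes ds: "doubly_stochastic n M" and dy: "\<And>i. i < n \<Longrightarrow> y' i = (\<Sum>j<n. M i j * y j)"
  shows "V n y - V n y' = (\<Sum>l<n. \<Sum>j<n. M l j * (y j - y' l)^2)"
proof -
  have row: "\<And>i. i < n \<Longrightarrow> (\<Sum>j<n. M i j) = 1" and col: "\<And>j. j < n \<Longrightarrow> (\<Sum>i<n. M i j) = 1"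
    using ds unfolding doubly_stochastic_def by auto
  have row_term: "(\<Sum>j<n. M l j * (y j - y' l)^2) = (\<Sum>j<n. M l j * (y j)^2) - (y' l)^2"
    if "l < n" for l
  proof -
    have "(\<Sum>j<n. M l j * (y j - y' l)^2)
        = (\<Sum>j<n. M l j * (y j)^2) - 2 * y' l * (\<Sum>j<n. M l j * y j) + (y' l)^2 * (\<Sum>j<n. M l j)"
      by (simp add: power2_diff algebra_simps sum.distrib sum_subtractf sum_distrib_left
          sum_distrib_right)
    then show ?thesis
      using row[OF that] dy[OF that] by (simp add: power2_eq_square)
  qed
  have "(\<Sum>l<n. \<Sum>j<n. M l j * (y j - y' l)^2)
      = (\<Sum>l<n. \<Sum>j<n. M l j * (y j)^2) - (\<Sum>l<n. (y' l)^2)"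
    using row_term by (simp add: sum_subtractf)
  also have "(\<Sum>l<n. \<Sum>j<n. M l j * (y j)^2) = (\<Sum>j<n. (\<Sum>l<n. M l j) * (y j)^2)"
    by (subst sum.swap) (simp add: sum_distrib_right)
  also have "\<dots> = (\<Sum>j<n. (y j)^2)"
    using col by simp
  finally show ?thesis
    using doubly_stochastic_preserves_sum[OF ds dy] by (simp add: V_eq_sum_squares)
qed

lemma weighted_spread_ge:
  fixes w y :: "'a \<Rightarrow> real"
  assumes "finite I" and nonneg: "\<And>j. j \<in> I \<Longrightarrow> 0 \<le> w j" and "0 \<le> \<eta>"
    and p: "p \<in> I" "\<eta> \<le> w p" and q: "q \<in> I" "\<eta> \<le> w q"
  shows "\<eta> / 2 * (y p - y q)^2 \<le> (\<Sum>j\<in>I. w j * (y j - z)^2)"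
proof (cases "p = q")
  case True
  then show ?thesis using nonneg by (simp add: sum_nonneg)
next
  case False
  have "(y p - y q)^2 \<le> 2 * ((y p - z)^2 + (y q - z)^2)"
    using zero_le_power2[of "y p + y q - 2 * z"] by (simp add: power2_eq_square algebra_simps)
  then have "\<eta> / 2 * (y p - y q)^2 \<le> \<eta> / 2 * (2 * ((y p - z)^2 + (y q - z)^2))"
    using \<open>0 \<le> \<eta>\<close> by (intro mult_left_mono) auto
  also have "\<dots> = \<eta> * (y p - z)^2 + \<eta> * (y q - z)^2"
    by (simp add: algebra_simps)
  also have "\<dots> \<le> w p * (y p - z)^2 + w q * (y q - z)^2"
    using p(2) q(2) by (intro add_mono mult_right_mono) auto
  also have "\<dots> = (\<Sum>j\<in>{p, q}. w j * (y j - z)^2)"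
    using False by simp
  also have "\<dots> \<le> (\<Sum>j\<in>I. w j * (y j - z)^2)"
    using assms p q by (intro sum_mono2) auto
  finally show ?thesis .
qed

lemma sum_squares_le_square_sum:
  fixes g :: "'a \<Rightarrow> real"
  assumes "\<And>d. d \<in> D \<Longrightarrow> 0 \<le> g d"
  shows "(\<Sum>d\<in>D. (g d)^2) \<le> (\<Sum>d\<in>D. g d)^2"
proof (cases "finite D")
  case True
  have "(\<Sum>d\<in>D. (g d)^2) \<le> (\<Sum>d\<in>D. g d * (\<Sum>e\<in>D. g e))"
    using True assms by (intro sum_mono) (auto simp: power2_eq_square intro!: mult_left_mono member_le_sum)
  also have "\<dots> = (\<Sum>d\<in>D. g d)^2"
    by (simp add: power2_eq_square sum_distrib_right)
  finally show ?thesis .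
qed simp

lemma sum_gaps_le_span:
  fixes v :: "nat \<Rightarrow> real"
  assumes anti: "\<And>a b. a \<le> b \<Longrightarrow> b < n \<Longrightarrow> v b \<le> v a"
    and D: "finite D" "D \<noteq> {}" "D \<subseteq> {1..<n}"
  shows "(\<Sum>d\<in>D. v (d - 1) - v d) \<le> v (Min D - 1) - v (Max D)"
proof -
  have bounds: "1 \<le> Min D" "Min D \<le> Max D" "Max D < n"
    using D by auto
  have "(\<Sum>d\<in>D. v (d - 1) - v d) \<le> (\<Sum>d\<in>{Min D..Max D}. v (d - 1) - v d)"
  proof (rule sum_mono2)
    fix b assume "b \<in> {Min D..Max D} - D"
    then have "b - 1 \<le> b" "b < n" using bounds by auto
    then show "0 \<le> v (b - 1) - v b" using anti by simp
  qed (use D in auto)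
  also have "\<dots> = v (Min D - 1) - v (Max D)"
    using sum_telescope''[of "Min D - 1" "Max D" "\<lambda>d. - v d"] bounds by simp
  finally show ?thesis .
qed

lemma sum_squared_gaps_grouped_le:
  fixes v :: "nat \<Rightarrow> real" and f :: "nat \<Rightarrow> 'a" and W :: "'a \<Rightarrow> real"
  assumes anti: "\<And>a b. a \<le> b \<Longrightarrow> b < n \<Longrightarrow> v b \<le> v a"
    and G: "G \<subseteq> {1..<n}" and f: "f ` G \<subseteq> I" "finite I" and "0 \<le> c"
    and W: "\<And>i. i \<in> I \<Longrightarrow> 0 \<le> W i"
    and bound: "\<And>d d'. d \<in> G \<Longrightarrow> d' \<in> G \<Longrightarrow> d \<le> d' \<Longrightarrow> f d = f d' \<Longrightarrow>
                  c * (v (d - 1) - v d')^2 \<le> W (f d)"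
  shows "c * (\<Sum>d\<in>G. (v (d - 1) - v d)^2) \<le> (\<Sum>i\<in>I. W i)"
proof -
  have finG: "finite G" using G finite_subset by blast
  have gap_nonneg: "0 \<le> v (d - 1) - v d" if "d \<in> G" for d
    using anti[of "d - 1" d] that G by auto
  have fibre: "c * (\<Sum>d\<in>{d \<in> G. f d = i}. (v (d - 1) - v d)^2) \<le> W i" if i: "i \<in> I" for i
  proof (cases "{d \<in> G. f d = i} = {}")
    case True
    then show ?thesis unfolding True using W[OF i] by simp
  next
    case False
    define D where "D = {d \<in> G. f d = i}"
    have D: "finite D" "D \<noteq> {}" "D \<subseteq> {1..<n}"
      using False finG G unfolding D_def by auto
    have "Min D \<in> D" "Max D \<in> D" using D by auto
    then have ends: "Min D \<in> G" "Max D \<in> G" "f (Min D) = i" "f (Max D) = i"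
      unfolding D_def by auto
    have "0 \<le> (\<Sum>d\<in>D. v (d - 1) - v d)"
      using gap_nonneg unfolding D_def by (intro sum_nonneg) auto
    moreover have "(\<Sum>d\<in>D. v (d - 1) - v d) \<le> v (Min D - 1) - v (Max D)"
      using sum_gaps_le_span[OF anti D] .
    ultimately have "(\<Sum>d\<in>D. v (d - 1) - v d)^2 \<le> (v (Min D - 1) - v (Max D))^2"
      by (intro power_mono) auto
    with sum_squares_le_square_sum[of D "\<lambda>d. v (d - 1) - v d"] gap_nonneg
    have "(\<Sum>d\<in>D. (v (d - 1) - v d)^2) \<le> (v (Min D - 1) - v (Max D))^2"
      unfolding D_def by fastforce
    then have "c * (\<Sum>d\<in>D. (v (d - 1) - v d)^2) \<le> c * (v (Min D - 1) - v (Max D))^2"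
      using \<open>0 \<le> c\<close> by (rule mult_left_mono)
    also have "\<dots> \<le> W i"
      using bound[of "Min D" "Max D"] ends D by auto
    finally show ?thesis unfolding D_def .
  qed
  have "c * (\<Sum>d\<in>G. (v (d - 1) - v d)^2) = (\<Sum>i\<in>I. c * (\<Sum>d\<in>{d \<in> G. f d = i}. (v (d - 1) - v d)^2))"
    by (simp add: sum.group[OF finG f(2,1)] sum_distrib_left)
  also have "\<dots> \<le> (\<Sum>i\<in>I. W i)"
    using fibre by (rule sum_mono)
  finally show ?thesis .
qed

lemma V_le_card_times_range_sq:
  assumes "\<And>i. i < n \<Longrightarrow> lo \<le> z i \<and> z i \<le> hi"
  shows "V n z \<le> real n * (hi - lo)^2"
proof (cases "n = 0")
  case False
  have "(\<Sum>i<n. lo) \<le> (\<Sum>i<n. z i)" "(\<Sum>i<n. z i) \<le> (\<Sum>i<n. hi)"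
    using assms by (auto intro!: sum_mono simp del: sum_constant)
  then have avg: "lo \<le> avg n z" "avg n z \<le> hi"
    using False unfolding avg_def by (simp_all add: field_simps)
  have "V n z \<le> (\<Sum>i<n. (hi - lo)^2)"
    unfolding V_def
  proof (rule sum_mono)
    fix i assume "i \<in> {..<n}"
    then have "\<bar>z i - avg n z\<bar> \<le> \<bar>hi - lo\<bar>" using assms[of i] avg by (simp add: abs_le_iff)
    then show "(z i - avg n z)^2 \<le> (hi - lo)^2" by (simp add: abs_le_square_iff)
  qed
  then show ?thesis by simp
qed (simp add: V_def)

lemma V_le_sorted_gaps:
  assumes \<sigma>: "\<sigma> permutes {..<n}" and sorted: "\<And>a b. a \<le> b \<Longrightarrow> b < n \<Longrightarrow> z (\<sigma> b) \<le> z (\<sigma> a)"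
  shows "V n z \<le> real n ^ 2 * (\<Sum>d\<in>{1..<n}. (z (\<sigma> (d - 1)) - z (\<sigma> d))^2)"
proof (cases "n = 0")
  case False
  define g where "g d = z (\<sigma> (d - 1)) - z (\<sigma> d)" for d
  have range: "z (\<sigma> (n - 1)) \<le> z i \<and> z i \<le> z (\<sigma> 0)" if "i < n" for i
  proof -
    have "i \<in> \<sigma> ` {..<n}"
      using permutes_image[OF \<sigma>] that by simp
    then obtain a where a: "a < n" "i = \<sigma> a"
      by blast
    have "z (\<sigma> (n - 1)) \<le> z (\<sigma> a)" "z (\<sigma> a) \<le> z (\<sigma> 0)"
      using a(1) by (auto intro: sorted)
    then show ?thesis
      using a(2) by simp
  qed
  have "{1..<n} = {Suc 0..n - 1}"
    using False by auto
  then have "z (\<sigma> 0) - z (\<sigma> (n - 1)) = (\<Sum>d\<in>{1..<n}. g d)"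
    using sum_telescope''[of 0 "n - 1" "\<lambda>d. - z (\<sigma> d)"] by (simp add: g_def)
  then have "V n z \<le> real n * (\<Sum>d\<in>{1..<n}. g d)^2"
    using V_le_card_times_range_sq[OF range] by simp
  also have "\<dots> \<le> real n * ((\<Sum>d\<in>{1..<n}. (g d)^2) * real n)"
  proof (rule mult_left_mono)
    have "(\<Sum>d\<in>{1..<n}. g d)^2 \<le> (\<Sum>d\<in>{1..<n}. (g d)^2) * real (n - 1)"
      using sum_squared_le_sum_of_squares[of g "{1..<n}"] by simp
    also have "\<dots> \<le> (\<Sum>d\<in>{1..<n}. (g d)^2) * real n"
      by (intro mult_left_mono sum_nonneg) auto
    finally show "(\<Sum>d\<in>{1..<n}. g d)^2 \<le> (\<Sum>d\<in>{1..<n}. (g d)^2) * real n" .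
  qed simp
  finally show ?thesis
    by (simp add: g_def power2_eq_square mult_ac)
qed (simp add: V_def)

lemma sorting_permutation:
  fixes f :: "nat \<Rightarrow> real"
  obtains \<sigma> where "\<sigma> permutes {..<n}" and "\<And>a b. a \<le> b \<Longrightarrow> b < n \<Longrightarrow> f (\<sigma> b) \<le> f (\<sigma> a)"
proof -
  define xs where "xs = sort_key (\<lambda>i. - f i) [0..<n]"
  define \<sigma> where "\<sigma> a = (if a < n then xs ! a else a)" for a
  have len: "length xs = n" and "distinct xs" and "set xs = {..<n}"
    unfolding xs_def by auto
  then have "bij_betw ((!) xs) {..<n} {..<n}"
    using bij_betw_nth by fastforce
  then have "bij_betw \<sigma> {..<n} {..<n}"
    by (rule bij_betw_cong[THEN iffD1, rotated]) (auto simp: \<sigma>_def)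
  then have "\<sigma> permutes {..<n}"
    by (rule bij_imp_permutes) (auto simp: \<sigma>_def)
  moreover have "f (\<sigma> b) \<le> f (\<sigma> a)" if "a \<le> b" "b < n" for a b
  proof -
    have "sorted (map (\<lambda>i. - f i) xs)"
      unfolding xs_def by (rule sorted_sort_key)
    then have "map (\<lambda>i. - f i) xs ! a \<le> map (\<lambda>i. - f i) xs ! b"
      using that len by (intro sorted_nth_mono) auto
    then show ?thesis using that len by (simp add: \<sigma>_def)
  qed
  ultimately show ?thesis using that by blast
qed

lemma permutes_image_lessThan_complement:
  fixes n d :: nat
  assumes "\<sigma> permutes {..<n}"
  shows "{..<n} - \<sigma> ` {..<d} = \<sigma> ` {d..<n}"
proof -
  have "{..<n} - {..<d} = {d..<n}"
    by auto
  then show ?thesis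
    using image_set_diff[OF permutes_inj[OF assms], of "{..<n}" "{..<d}"] permutes_image[OF assms]
    by simp
qed

locale averaging_dynamics =
  fixes n :: nat and \<eta> :: real
    and A :: "nat \<Rightarrow> nat \<Rightarrow> nat \<Rightarrow> real" and x :: "nat \<Rightarrow> nat \<Rightarrow> real"
  assumes eta_pos: "0 < \<eta>"
    and dyn: "\<And>k i. i < n \<Longrightarrow> x (Suc k) i = (\<Sum>j<n. A k i j * x k j)"
    and ds: "\<And>k. doubly_stochastic n (A k)"
    and diag: "\<And>k i. i < n \<Longrightarrow> 0 < A k i i"
    and lb: "\<And>k i j. i < n \<Longrightarrow> j < n \<Longrightarrow> 0 < A k i j \<Longrightarrow> \<eta> \<le> A k i j"
begin

lemma entry_nonneg: "i < n \<Longrightarrow> j < n \<Longrightarrow> 0 \<le> A t i j"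
  using ds unfolding doubly_stochastic_def by auto

lemma row_sum: "i < n \<Longrightarrow> (\<Sum>j<n. A t i j) = 1"
  using ds unfolding doubly_stochastic_def by auto

definition separated :: "nat \<Rightarrow> nat set \<Rightarrow> real \<Rightarrow> real \<Rightarrow> bool" where
  "separated t U a b \<longleftrightarrow> (\<forall>i\<in>U. a \<le> x t i) \<and> (\<forall>j\<in>{..<n} - U. x t j \<le> b)"

definition cut_crossed :: "nat \<Rightarrow> nat set \<Rightarrow> bool" where
  "cut_crossed t U \<longleftrightarrow>
     (\<exists>i\<in>U. \<exists>j\<in>{..<n} - U. (i, j) \<in> edges n (A t) \<or> (j, i) \<in> edges n (A t))"

definition mixing_row :: "nat \<Rightarrow> nat \<Rightarrow> real \<Rightarrow> real \<Rightarrow> bool" where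
  "mixing_row t l a b \<longleftrightarrow> l < n \<and> (\<exists>p<n. \<exists>q<n. 0 < A t l p \<and> 0 < A t l q \<and> a \<le> x t p \<and> x t q \<le> b)"

definition dispersion :: "nat \<Rightarrow> nat \<Rightarrow> real" where
  "dispersion t l = (\<Sum>j<n. A t l j * (x t j - x (Suc t) l)^2)"

(* Without an edge across the cut, every agent averages only over agents on its own side. *)
lemma separated_Suc:
  assumes U: "U \<subseteq> {..<n}" and sep: "separated t U a b" and "\<not> cut_crossed t U"
  shows "separated (Suc t) U a b"
proof -
  have inside: "j \<in> U" if "i \<in> U" "j < n" "A t i j \<noteq> 0" for i j
    using \<open>\<not> cut_crossed t U\<close> that U entry_nonneg[of i j t]
    unfolding cut_crossed_def edges_def by (force simp: less_eq_real_def)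
  have outside: "j \<notin> U" if "i \<in> {..<n} - U" "j < n" "A t i j \<noteq> 0" for i j
    using \<open>\<not> cut_crossed t U\<close> that entry_nonneg[of i j t]
    unfolding cut_crossed_def edges_def by (force simp: less_eq_real_def)
  have "a \<le> x (Suc t) i" if "i \<in> U" for i
  proof -
    have "i < n" using that U by auto
    then show ?thesis
      using sep inside[OF that] entry_nonneg row_sum unfolding separated_def
      by (auto simp: dyn intro!: weighted_average_ge)
  qed
  moreover have "x (Suc t) j \<le> b" if "j \<in> {..<n} - U" for j
    using that sep outside[OF that] entry_nonneg row_sum unfolding separated_def
    by (auto simp: dyn intro!: weighted_average_le)
  ultimately show ?thesis
    unfolding separated_def by blast
qed

lemma separated_until_crossing:
  assumes "U \<subseteq> {..<n}" and "separated s U a b" and "s \<le> t"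
    and "\<And>\<tau>. s \<le> \<tau> \<Longrightarrow> \<tau> < t \<Longrightarrow> \<not> cut_crossed \<tau> U"
  shows "separated t U a b"
  using \<open>s \<le> t\<close> assms(4)
proof (induction t rule: dec_induct)
  case (step m)
  then show ?case using separated_Suc[OF assms(1)] by simp
qed (rule assms(2))

(* The positive diagonal makes the receiving endpoint of the crossing edge the second supported agent. *)
lemma crossed_cut_mixing_row:
  assumes U: "U \<subseteq> {..<n}" and sep: "separated t U a b" and "cut_crossed t U"
  shows "\<exists>l. mixing_row t l a b"
proof -
  obtain i j where ij: "i \<in> U" "j \<in> {..<n} - U" "(i, j) \<in> edges n (A t) \<or> (j, i) \<in> edges n (A t)"
    using \<open>cut_crossed t U\<close> unfolding cut_crossed_def by blast
  have xi: "a \<le> x t i" and xj: "x t j \<le> b" and n: "i < n" "j < n"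
    using sep ij(1,2) U unfolding separated_def by auto
  from ij(3) show ?thesis
  proof
    assume "(i, j) \<in> edges n (A t)"
    then have "mixing_row t j a b"
      unfolding mixing_row_def edges_def using n xi xj diag by blast
    then show ?thesis ..
  next
    assume "(j, i) \<in> edges n (A t)"
    then have "mixing_row t i a b"
      unfolding mixing_row_def edges_def using n xi xj diag by blast
    then show ?thesis ..
  qed
qed

lemma first_crossing_mixing_row:
  assumes "U \<subseteq> {..<n}" and "separated s U a b"
    and "s \<le> t" "t < s + B" "cut_crossed t U"
  shows "\<exists>t' l. s \<le> t' \<and> t' < s + B \<and> mixing_row t' l a b"
proof -
  obtain t0 where t0: "s \<le> t0" "cut_crossed t0 U"
    and least: "\<And>\<tau>. s \<le> \<tau> \<Longrightarrow> cut_crossed \<tau> U \<Longrightarrow> t0 \<le> \<tau>"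
    using ex_has_least_nat[of "\<lambda>\<tau>. s \<le> \<tau> \<and> cut_crossed \<tau> U" t id] assms(3,5) by auto
  have "separated t0 U a b"
    using separated_until_crossing[OF assms(1,2) t0(1)] least by force
  then obtain l where "mixing_row t0 l a b"
    using crossed_cut_mixing_row[OF assms(1) _ t0(2)] by blast
  moreover have "t0 < s + B"
    using least[OF assms(3,5)] assms(4) by simp
  ultimately show ?thesis
    using t0(1) by blast
qed

lemma mixing_row_combine:
  "mixing_row t l a b \<Longrightarrow> mixing_row t l a' b' \<Longrightarrow> mixing_row t l a b'"
  unfolding mixing_row_def by blast

lemma dispersion_nonneg: "l < n \<Longrightarrow> 0 \<le> dispersion t l"
  unfolding dispersion_def by (auto intro!: sum_nonneg mult_nonneg_nonneg entry_nonneg)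

lemma mixing_row_dispersion:
  assumes "mixing_row t l a b" and "b \<le> a"
  shows "\<eta> / 2 * (a - b)^2 \<le> dispersion t l"
proof -
  obtain p q where pq: "l < n" "p < n" "q < n" "0 < A t l p" "0 < A t l q" "a \<le> x t p" "x t q \<le> b"
    using assms(1) unfolding mixing_row_def by blast
  have "(a - b)^2 \<le> (x t p - x t q)^2"
    using pq assms(2) by (intro power_mono) auto
  then have "\<eta> / 2 * (a - b)^2 \<le> \<eta> / 2 * (x t p - x t q)^2"
    using eta_pos by (intro mult_left_mono) auto
  also have "\<dots> \<le> dispersion t l"
    unfolding dispersion_def
    using pq eta_pos by (intro weighted_spread_ge) (auto intro: entry_nonneg lb)
  finally show ?thesis .
qed

lemma V_drop_window: "V n (x s) - V n (x (s + B)) = (\<Sum>t\<in>{s..<s + B}. \<Sum>l<n. dispersion t l)"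
proof -
  have "V n (x t) - V n (x (Suc t)) = (\<Sum>l<n. dispersion t l)" for t
    unfolding dispersion_def by (rule doubly_stochastic_V_drop[OF ds dyn])
  then show ?thesis
    using sum_Suc_diff'[of s "s + B" "\<lambda>t. - V n (x t)"] by simp
qed

lemma gap_energy_le_window_drop:
  assumes \<sigma>: "\<sigma> permutes {..<n}"
    and sorted: "\<And>a b. a \<le> b \<Longrightarrow> b < n \<Longrightarrow> x s (\<sigma> b) \<le> x s (\<sigma> a)"
    and crossed: "\<And>d. 1 \<le> d \<Longrightarrow> d < n \<Longrightarrow> x s (\<sigma> (d - 1)) \<noteq> x s (\<sigma> d) \<Longrightarrow>
                    \<exists>t. s \<le> t \<and> t < s + B \<and> cut_crossed t (\<sigma> ` {..<d})"
  shows "\<eta> / 2 * (\<Sum>d\<in>{1..<n}. (x s (\<sigma> (d - 1)) - x s (\<sigma> d))^2) \<le> V n (x s) - V n (x (s + B))"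
proof -
  define v where "v a = x s (\<sigma> a)" for a
  define G where "G = {d \<in> {1..<n}. v (d - 1) \<noteq> v d}"
  have anti: "\<And>a b. a \<le> b \<Longrightarrow> b < n \<Longrightarrow> v b \<le> v a"
    unfolding v_def by (rule sorted)
  have top: "\<sigma> ` {..<d} \<subseteq> {..<n}" if "d < n" for d
    using permutes_image[OF \<sigma>] that by auto
  have "separated s (\<sigma> ` {..<d}) (v (d - 1)) (v d)" if "1 \<le> d" "d < n" for d
  proof -
    show ?thesis
      unfolding separated_def v_def permutes_image_lessThan_complement[OF \<sigma>]
      using that by (auto intro!: sorted)
  qed
  then have "\<exists>y\<in>{s..<s + B} \<times> {..<n}. mixing_row (fst y) (snd y) (v (d - 1)) (v d)" if "d \<in> G" for d
    using that first_crossing_mixing_row[OF top] crossed unfolding G_def v_def mixing_row_def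
    by fastforce
  then obtain f where f: "f ` G \<subseteq> {s..<s + B} \<times> {..<n}"
    and mix: "\<And>d. d \<in> G \<Longrightarrow> mixing_row (fst (f d)) (snd (f d)) (v (d - 1)) (v d)"
    by (metis (no_types) bchoice image_subsetI)
  have "\<eta> / 2 * (\<Sum>d\<in>G. (v (d - 1) - v d)^2) \<le> (\<Sum>y\<in>{s..<s + B} \<times> {..<n}. dispersion (fst y) (snd y))"
  proof (rule sum_squared_gaps_grouped_le[OF anti _ f])
    fix d d' assume dd: "d \<in> G" "d' \<in> G" "d \<le> d'" "f d = f d'"
    have "mixing_row (fst (f d)) (snd (f d)) (v (d - 1)) (v d')"
      using mix[OF dd(1)] mix[OF dd(2)] dd(4) by (metis mixing_row_combine)
    moreover have "v d' \<le> v (d - 1)"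
      using anti dd(2,3) unfolding G_def by auto
    ultimately show "\<eta> / 2 * (v (d - 1) - v d')^2 \<le> dispersion (fst (f d)) (snd (f d))"
      by (rule mixing_row_dispersion)
  qed (use eta_pos dispersion_nonneg G_def in auto)
  moreover have "(\<Sum>d\<in>G. (v (d - 1) - v d)^2) = (\<Sum>d\<in>{1..<n}. (v (d - 1) - v d)^2)"
    unfolding G_def by (intro sum.mono_neutral_left) auto
  moreover have "(\<Sum>y\<in>{s..<s + B} \<times> {..<n}. dispersion (fst y) (snd y)) = V n (x s) - V n (x (s + B))"
    by (simp add: V_drop_window sum.cartesian_product case_prod_beta)
  ultimately show ?thesis
    unfolding v_def by simp
qed

end

theorem lemma5:
  fixes n B :: nat and \<eta> :: real
    and A :: "nat \<Rightarrow> nat \<Rightarrow> nat \<Rightarrow> real"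
    and x :: "nat \<Rightarrow> nat \<Rightarrow> real"
  assumes eta: "\<eta> > 0"
    and B: "B \<ge> 1"
    and dyn: "\<And>k i. i < n \<Longrightarrow> x (Suc k) i = (\<Sum>j<n. A k i j * x k j)"
    and ds: "\<And>k. doubly_stochastic n (A k)"
    and diag: "\<And>k i. i < n \<Longrightarrow> A k i i > 0"
    and lb: "\<And>k i j. i < n \<Longrightarrow> j < n \<Longrightarrow> A k i j > 0 \<Longrightarrow> A k i j \<ge> \<eta>"
    and conn: "\<And>k \<sigma> d. \<sigma> permutes {..<n} \<Longrightarrow>
        (\<forall>a b. a < b \<and> b < n \<longrightarrow> x (k * B) (\<sigma> a) \<ge> x (k * B) (\<sigma> b)) \<Longrightarrow>
        1 \<le> d \<Longrightarrow> d \<le> n - 1 \<Longrightarrow>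
        x (k * B) (\<sigma> (d - 1)) = x (k * B) (\<sigma> d) \<or>
        (\<exists>t i j. k * B \<le> t \<and> t \<le> (k + 1) * B - 1 \<and>
           i \<in> \<sigma> ` {..<d} \<and> j \<in> \<sigma> ` {d..<n} \<and>
           ((i, j) \<in> edges n (A t) \<or> (j, i) \<in> edges n (A t)))"
    and pos: "V n (x (k * B)) > 0"
  shows "(V n (x (k * B)) - V n (x ((k + 1) * B))) / V n (x (k * B)) \<ge> \<eta> / (2 * real n ^ 2)"
proof -
  interpret averaging_dynamics n \<eta> A x
    using eta dyn ds diag lb by unfold_locales
  define s where "s = k * B"
  obtain \<sigma> where \<sigma>: "\<sigma> permutes {..<n}"
    and sorted: "\<And>a b. a \<le> b \<Longrightarrow> b < n \<Longrightarrow> x s (\<sigma> b) \<le> x s (\<sigma> a)"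
    using sorting_permutation by blast
  have "(k + 1) * B - 1 = s + B - 1" "s + B - 1 < s + B"
    using B unfolding s_def by simp_all
  then have "\<exists>t. s \<le> t \<and> t < s + B \<and> cut_crossed t (\<sigma> ` {..<d})"
    if "1 \<le> d" "d < n" "x s (\<sigma> (d - 1)) \<noteq> x s (\<sigma> d)" for d
    using conn[OF \<sigma>, of k d] sorted that
    unfolding cut_crossed_def permutes_image_lessThan_complement[OF \<sigma>] s_def
    by fastforce
  then have drop: "\<eta> / 2 * (\<Sum>d\<in>{1..<n}. (x s (\<sigma> (d - 1)) - x s (\<sigma> d))^2)
                     \<le> V n (x s) - V n (x (s + B))"
    using gap_energy_le_window_drop[OF \<sigma> sorted] by blast
  have "n \<noteq> 0"
    using pos by (cases "n = 0") (simp_all add: V_def)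
  then have "\<eta> / (2 * real n ^ 2) * V n (x s) \<le> V n (x s) - V n (x (s + B))"
    using mult_left_mono[OF V_le_sorted_gaps[where z = "x s", OF \<sigma> sorted], of "\<eta> / (2 * real n ^ 2)"] eta drop
    by simp
  then show ?thesis
    using pos unfolding s_def by (simp add: algebra_simps le_divide_eq)
qed

end
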